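(* Fix real $C_1,C_2$ with $2C_1+C_2>0$ and fix $C_3\in(0,C_{3,crit})$. Then the period function $b\mapsto\mathfrak L(C_1,C_2,C_3,b)$ is strictly increasing on $(b_-(C_3),b_+(C_3))$.
   Context: Let $\alpha>0$ and real constants $C_1,C_2$ be given. Travelling wave profiles $\phi$ of the DGH equation satisfy, for real constants $b$ and $C_3$, (E1) $\alpha^2(\phi-C_1)\phi''+\frac12\alpha^2(\phi')^2+(C_1-C_2-\frac32\phi)\phi=b$, and the first integral (E2) $\alpha^2(\phi-C_1)(\phi')^2+(C_1-C_2)\phi^2-\phi^3-2b\phi+C_1(2b+C_1C_2)=C_3$. Let $C_{3,crit}=\frac1{27}(2C_1+C_2)^3$. For $C_3\in(0,C_{3,crit})$, let $\phi_1<\phi_2<\phi_3$ be the roots of $2(\phi-C_1)^2(\phi+\frac{C_2}2)=C_3$; they satisfy $-\frac{C_2}{2}<\phi_1<\frac{C_1-C_2}{3}<\phi_2<C_1<\phi_3$. Let $U(\phi)=-\frac12\phi^2-\frac12C_2\phi-\frac12C_1C_2-\frac{C_3}{2(\phi-C_1)}$, so that with $z=\xi/\alpha$ (E2) reads $b=\frac12(d\phi/dz)^2+U(\phi)$. Set $b_-(C_3)=U(\phi_2)$ and $b_+(C_3)=U(\phi_1)$. For $b\in(b_-(C_3),b_+(C_3))$, let $\phi_-<\phi_+$ be the two solutions of $U(\phi)=b$ with $\phi_1<\phi_-<\phi_2<\phi_+<C_1$. The period function (the $z$-period of the corresponding periodic orbit) is $$\mathfrak L(C_1,C_2,C_3,b)=2\int_{\phi_-}^{\phi_+}\frac{d\phi}{\sqrt{2(b-U(\phi))}}.$$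 *)

theory Defs
  imports "HOL-Analysis.Analysis"
begin

definition C3crit :: "real \<Rightarrow> real \<Rightarrow> real" where
  "C3crit C1 C2 = (2*C1 + C2)^3 / 27"

definition Upot :: "real \<Rightarrow> real \<Rightarrow> real \<Rightarrow> real \<Rightarrow> real" where
  "Upot C1 C2 C3 p = -(p^2)/2 - C2*p/2 - C1*C2/2 - C3 / (2*(p - C1))"

definition cubic :: "real \<Rightarrow> real \<Rightarrow> real \<Rightarrow> real" where
  "cubic C1 C2 p = 2*(p - C1)^2 * (p + C2/2)"

definition phi1 :: "real \<Rightarrow> real \<Rightarrow> real \<Rightarrow> real" where
  "phi1 C1 C2 C3 = (THE p. -C2/2 < p \<and> p < (C1-C2)/3 \<and> cubic C1 C2 p = C3)"

definition phi2 :: "real \<Rightarrow> real \<Rightarrow> real \<Rightarrow> real" where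
  "phi2 C1 C2 C3 = (THE p. (C1-C2)/3 < p \<and> p < C1 \<and> cubic C1 C2 p = C3)"

definition bminus :: "real \<Rightarrow> real \<Rightarrow> real \<Rightarrow> real" where
  "bminus C1 C2 C3 = Upot C1 C2 C3 (phi2 C1 C2 C3)"

definition bplus :: "real \<Rightarrow> real \<Rightarrow> real \<Rightarrow> real" where
  "bplus C1 C2 C3 = Upot C1 C2 C3 (phi1 C1 C2 C3)"

definition phiminus :: "real \<Rightarrow> real \<Rightarrow> real \<Rightarrow> real \<Rightarrow> real" where
  "phiminus C1 C2 C3 b = (THE p. phi1 C1 C2 C3 < p \<and> p < phi2 C1 C2 C3 \<and> Upot C1 C2 C3 p = b)"

definition phiplus :: "real \<Rightarrow> real \<Rightarrow> real \<Rightarrow> real \<Rightarrow> real" where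
  "phiplus C1 C2 C3 b = (THE p. phi2 C1 C2 C3 < p \<and> p < C1 \<and> Upot C1 C2 C3 p = b)"

text \<open>The integrand is nonnegative with integrable endpoint singularities; the
  (Henstock-Kurzweil) integral over the closed interval equals the improper integral.\<close>
definition period :: "real \<Rightarrow> real \<Rightarrow> real \<Rightarrow> real \<Rightarrow> real" where
  "period C1 C2 C3 b = 2 * integral {phiminus C1 C2 C3 b .. phiplus C1 C2 C3 b}
      (\<lambda>p. 1 / sqrt (2 * (b - Upot C1 C2 C3 p)))"

end

theory Submission
  imports Defs
begin

text \<open>
  Write \<open>x = C1 - \<phi>\<close> and \<open>S = 2 C1 + C2\<close>. On the orbit of energy \<open>b\<close> one has
  \<open>2 (b - U) = (x - a) (c - x) (d - x) / x\<close>, where \<open>a < c < d\<close> satisfy \<open>a + c + d = S\<close>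
  and \<open>a c d = C3\<close>, and the turning points are \<open>\<phi>\<^sub>+ = C1 - a\<close>, \<open>\<phi>\<^sub>- = C1 - c\<close>.
  The substitution \<open>x = c cos\<^sup>2 t + a sin\<^sup>2 t\<close> removes both endpoint singularities and
  writes the period as \<open>4\<close> times the integral of \<open>sqrt (x / (d - x))\<close> over \<open>[0, \<pi>/2]\<close>.
  Averaging the integrand with its reflection \<open>t \<mapsto> \<pi>/2 - t\<close> gives a kernel depending on
  \<open>b\<close> only through \<open>c\<close>, since \<open>a\<close> and \<open>d\<close> are the roots of \<open>z\<^sup>2 - (S - c) z + C3/c\<close>.
  The middle root \<open>c\<close> increases with \<open>b\<close>, and the kernel increases strictly with \<open>c\<close>:
  its derivative is a positive multiple of a sum of two quotients whose positivity
  reduces to a polynomial inequality in \<open>a, c, d\<close> and the averaging parameter.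
\<close>

lemma strict_mono_on_ex1_level:
  fixes f :: "real \<Rightarrow> real"
  assumes "l < r" "continuous_on {l..r} f" "strict_mono_on {l..r} f" "f l < y" "y < f r"
  shows "\<exists>!x. l < x \<and> x < r \<and> f x = y"
proof -
  obtain x where x: "l \<le> x" "x \<le> r" "f x = y"
    using IVT'[of f l y r] assms by auto
  then have "l < x \<and> x < r \<and> f x = y" using assms(4,5) by (auto simp: le_less)
  moreover have "z = x" if "l < z \<and> z < r \<and> f z = y" for z
    using strict_mono_on_eqD[OF assms(3)] that x by auto
  ultimately show ?thesis by blast
qed

lemma the_reflect_eq:
  fixes e :: "'a :: ab_group_add"
  assumes "\<exists>!x. P x" "\<And>p. Q p \<longleftrightarrow> P (e - p)"
  shows "(THE p. Q p) = e - (THE x. P x)"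
proof (rule the_equality)
  have "e - (e - (THE x. P x)) = (THE x. P x)" by simp
  then show "Q (e - (THE x. P x))" using assms(2) theI'[OF assms(1)] by simp
next
  fix p assume "Q p"
  then have "(THE x. P x) = e - p" by (intro the1_equality[OF assms(1)]) (use assms(2) in simp)
  then show "p = e - (THE x. P x)" by simp
qed

lemma interpolation_bounds:
  fixes a c u :: real
  assumes "a \<le> c" "0 \<le> u" "u \<le> 1"
  shows "a \<le> a*(1-u) + c*u" "a*(1-u) + c*u \<le> c" "a \<le> a*u + c*(1-u)" "a*u + c*(1-u) \<le> c"
proof -
  have "0 \<le> (c - a)*u" "(c - a)*u \<le> c - a" "0 \<le> (c - a)*(1-u)" "(c - a)*(1-u) \<le> c - a"
    using assms by (simp_all add: mult_left_le)
  then show "a \<le> a*(1-u) + c*u" "a*(1-u) + c*u \<le> c" "a \<le> a*u + c*(1-u)" "a*u + c*(1-u) \<le> c"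
    by (simp_all add: algebra_simps)
qed

section \<open>The cubic and the reduced potential\<close>

definition critical_cubic :: "real \<Rightarrow> real \<Rightarrow> real" where
  "critical_cubic S x = x^2*(S - 2*x)"

definition reduced_potential :: "real \<Rightarrow> real \<Rightarrow> real \<Rightarrow> real" where
  "reduced_potential S k x = (S*x - x^2 + k/x)/2"

lemma cubic_eq_critical_cubic: "cubic C1 C2 p = critical_cubic (2*C1 + C2) (C1 - p)"
  unfolding cubic_def critical_cubic_def by (simp add: algebra_simps power2_eq_square)

lemma Upot_eq_reduced_potential:
  "Upot C1 C2 C3 p = -(C1*(C1 + 2*C2))/2 + reduced_potential (2*C1 + C2) C3 (C1 - p)"
proof (cases "p = C1")
  case False
  then have "C1 - p \<noteq> 0" "p - C1 \<noteq> 0" by auto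
  then show ?thesis unfolding Upot_def reduced_potential_def
    by (simp add: field_simps power2_eq_square)
qed (simp add: Upot_def reduced_potential_def algebra_simps power2_eq_square)

lemma critical_cubic_strict_mono_on:
  assumes "0 < S"
  shows "strict_mono_on {0..S/3} (critical_cubic S)"
proof (rule strict_mono_onI)
  fix x y assume "x \<in> {0..S/3}" "y \<in> {0..S/3}" "x < y"
  then have xy: "0 \<le> x" "x < y" "y \<le> S/3" by auto
  have "x*x \<le> x*(S/3)" "x*y \<le> x*(S/3)" "y*y \<le> y*(S/3)"
    using xy by (intro mult_left_mono; linarith)+
  moreover have "x*y < (S/3)*y" using xy by (intro mult_strict_right_mono) auto
  ultimately have "0 < S*(x+y) - 2*(x^2 + x*y + y^2)" by (simp add: power2_eq_square algebra_simps)
  then have "0 < (y-x)*(S*(x+y) - 2*(x^2 + x*y + y^2))" using xy by simp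
  moreover have "critical_cubic S y - critical_cubic S x = (y-x)*(S*(x+y) - 2*(x^2 + x*y + y^2))"
    unfolding critical_cubic_def by (simp add: algebra_simps power2_eq_square)
  ultimately show "critical_cubic S x < critical_cubic S y" by linarith
qed

lemma critical_cubic_strict_antimono_on:
  assumes "0 < S"
  shows "strict_mono_on {S/3..} (\<lambda>x. - critical_cubic S x)"
proof (rule strict_mono_onI)
  fix x y assume "x \<in> {S/3..}" "y \<in> {S/3..}" "x < y"
  then have xy: "S/3 \<le> x" "x < y" using assms by auto
  then have "0 < x" using assms by linarith
  then have "x*(S/3) \<le> x*x" "x*(S/3) \<le> x*y" "(S/3)*y \<le> x*y" "y*(S/3) < y*y"
    using xy by (intro mult_left_mono mult_right_mono mult_strict_left_mono; linarith)+
  then have "0 < 2*(x^2 + x*y + y^2) - S*(x+y)" by (simp add: power2_eq_square algebra_simps)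
  then have "0 < (y-x)*(2*(x^2 + x*y + y^2) - S*(x+y))" using xy by simp
  moreover have "critical_cubic S x - critical_cubic S y = (y-x)*(2*(x^2 + x*y + y^2) - S*(x+y))"
    unfolding critical_cubic_def by (simp add: algebra_simps power2_eq_square)
  ultimately show "- critical_cubic S x < - critical_cubic S y" by linarith
qed

lemma has_real_derivative_reduced_potential:
  assumes "0 < x"
  shows "(reduced_potential S k has_real_derivative (critical_cubic S x - k) / (2*x^2)) (at x)"
  unfolding reduced_potential_def[abs_def] critical_cubic_def using assms
  by (auto intro!: derivative_eq_intros simp: field_simps power2_eq_square)

lemma reduced_potential_continuous_on: "0 < l \<Longrightarrow> continuous_on {l..r} (reduced_potential S k)"
  unfolding reduced_potential_def[abs_def] by (intro continuous_intros) auto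

lemma reduced_potential_strict_mono_on:
  assumes "0 < l" and cubic: "\<And>x. l < x \<Longrightarrow> x < r \<Longrightarrow> k < critical_cubic S x"
  shows "strict_mono_on {l..r} (reduced_potential S k)"
proof (rule strict_mono_onI)
  fix x y assume xy: "x \<in> {l..r}" "y \<in> {l..r}" "x < y"
  show "reduced_potential S k x < reduced_potential S k y"
  proof (rule DERIV_pos_imp_increasing_open[OF \<open>x < y\<close>])
    fix z assume z: "x < z" "z < y"
    then have "0 < z" "k < critical_cubic S z" using xy \<open>0 < l\<close> cubic by auto
    then show "\<exists>D. (reduced_potential S k has_real_derivative D) (at z) \<and> 0 < D"
      using has_real_derivative_reduced_potential by fastforce
  qed (use xy \<open>0 < l\<close> reduced_potential_continuous_on in auto)
qed

lemma reduced_potential_strict_antimono_on: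
  assumes "0 < l" and cubic: "\<And>x. l < x \<Longrightarrow> x < r \<Longrightarrow> critical_cubic S x < k"
  shows "strict_mono_on {l..r} (\<lambda>x. - reduced_potential S k x)"
proof (rule strict_mono_onI)
  fix x y assume xy: "x \<in> {l..r}" "y \<in> {l..r}" "x < y"
  have "reduced_potential S k y < reduced_potential S k x"
  proof (rule DERIV_neg_imp_decreasing_open[OF \<open>x < y\<close>])
    fix z assume z: "x < z" "z < y"
    then have "0 < z" "critical_cubic S z < k" using xy \<open>0 < l\<close> cubic by auto
    then show "\<exists>D. (reduced_potential S k has_real_derivative D) (at z) \<and> D < 0"
      using has_real_derivative_reduced_potential by (fastforce simp: divide_neg_pos)
  qed (use xy \<open>0 < l\<close> reduced_potential_continuous_on in auto)
  then show "- reduced_potential S k x < - reduced_potential S k y" by simp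
qed

lemma reduced_potential_level_factor:
  fixes S k a c \<beta> :: real
  assumes "0 < a" "a < c" "reduced_potential S k a = \<beta>" "reduced_potential S k c = \<beta>"
  shows "a*c*(S - a - c) = k"
    and "\<And>x. 0 < x \<Longrightarrow> 2*(\<beta> - reduced_potential S k x) = (x - a)*(c - x)*((S - a - c) - x) / x"
proof -
  have level: "S*x^2 - x^3 + k = 2*\<beta>*x" if "0 < x" "reduced_potential S k x = \<beta>" for x
  proof -
    have "(S*x - x^2 + k/x)*x = 2*\<beta>*x" using that unfolding reduced_potential_def by simp
    then show ?thesis using that by (simp add: algebra_simps power2_eq_square power3_eq_cube)
  qed
  have la: "S*a^2 - a^3 + k = 2*\<beta>*a" and lc: "S*c^2 - c^3 + k = 2*\<beta>*c"
    using level assms by auto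
  have "(a - c)*(S*(a + c) - (a^2 + a*c + c^2) - 2*\<beta>)
      = (S*a^2 - a^3 + k - 2*\<beta>*a) - (S*c^2 - c^3 + k - 2*\<beta>*c)"
    by (simp add: algebra_simps power2_eq_square power3_eq_cube)
  then have \<beta>: "2*\<beta> = S*(a + c) - (a^2 + a*c + c^2)" using la lc assms(2) by simp
  show k: "a*c*(S - a - c) = k"
    using la unfolding \<beta> by (simp add: algebra_simps power2_eq_square power3_eq_cube)
  fix x :: real assume "0 < x"
  have "2*(\<beta> - reduced_potential S k x) = 2*\<beta> - S*x + x^2 - k/x"
    unfolding reduced_potential_def by (simp add: field_simps)
  also have "\<dots> = (x - a)*(c - x)*((S - a - c) - x) / x"
    unfolding \<beta> k[symmetric] using \<open>0 < x\<close> by (simp add: field_simps power2_eq_square)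
  finally show "2*(\<beta> - reduced_potential S k x) = (x - a)*(c - x)*((S - a - c) - x) / x" .
qed

lemma third_root_gt:
  fixes S k a c :: real
  assumes "0 < a" "a < c" "a*c*(S - a - c) = k" "k < critical_cubic S c"
  shows "c < S - a - c"
proof -
  have "c*(a*(S - a - c)) < c*(c*(S - 2*c))"
    using assms unfolding critical_cubic_def by (simp add: power2_eq_square algebra_simps)
  then have "a*(S - a - c) < c*(S - 2*c)" using assms by (simp add: mult_less_cancel_left)
  moreover have "c*(S - 2*c) - a*(S - a - c) = (c - a)*((S - a - c) - c)"
    by (simp add: algebra_simps)
  ultimately have "0 < (c - a)*((S - a - c) - c)" by linarith
  then show ?thesis using assms by (simp add: zero_less_mult_iff)
qed

section \<open>Turning points\<close>

text \<open>
  In the coordinate \<open>x = C1 - \<phi>\<close> (with \<open>S = 2 C1 + C2\<close>, \<open>k = C3\<close>) the critical points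
  \<open>\<phi>\<^sub>2, \<phi>\<^sub>1\<close> become \<open>critical_point_lo < critical_point_hi\<close>, and at level
  \<open>\<beta> = b + C1 (C1 + 2 C2) / 2\<close> of the reduced potential the turning points
  \<open>\<phi>\<^sub>+, \<phi>\<^sub>-\<close> become \<open>turning_point_lo < turning_point_hi\<close>.
\<close>

definition critical_point_lo :: "real \<Rightarrow> real \<Rightarrow> real" where
  "critical_point_lo S k = (THE x. 0 < x \<and> x < S/3 \<and> critical_cubic S x = k)"

definition critical_point_hi :: "real \<Rightarrow> real \<Rightarrow> real" where
  "critical_point_hi S k = (THE x. S/3 < x \<and> x < S/2 \<and> critical_cubic S x = k)"

definition turning_point_lo :: "real \<Rightarrow> real \<Rightarrow> real \<Rightarrow> real" where
  "turning_point_lo S k \<beta> =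
     (THE x. 0 < x \<and> x < critical_point_lo S k \<and> reduced_potential S k x = \<beta>)"

definition turning_point_hi :: "real \<Rightarrow> real \<Rightarrow> real \<Rightarrow> real" where
  "turning_point_hi S k \<beta> =
     (THE x. critical_point_lo S k < x \<and> x < critical_point_hi S k \<and> reduced_potential S k x = \<beta>)"

context
  fixes S k :: real
  assumes S_pos: "0 < S" and k_pos: "0 < k" and k_less: "27*k < S^3"
begin

lemma critical_cubic_third: "k < critical_cubic S (S/3)"
  using k_less unfolding critical_cubic_def
    by (simp add: field_simps power2_eq_square power3_eq_cube)

lemma critical_cubic_continuous_on: "continuous_on A (critical_cubic S)"
  unfolding critical_cubic_def[abs_def] by (intro continuous_intros)

lemma ex1_critical_point_lo: "\<exists>!x. 0 < x \<and> x < S/3 \<and> critical_cubic S x = k"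
  using S_pos k_pos critical_cubic_third
  by (intro strict_mono_on_ex1_level critical_cubic_strict_mono_on critical_cubic_continuous_on)
     (simp_all add: critical_cubic_def)

lemma ex1_critical_point_hi: "\<exists>!x. S/3 < x \<and> x < S/2 \<and> critical_cubic S x = k"
proof -
  have "\<exists>!x. S/3 < x \<and> x < S/2 \<and> - critical_cubic S x = - k"
  proof (rule strict_mono_on_ex1_level)
    show "strict_mono_on {S/3..S/2} (\<lambda>x. - critical_cubic S x)"
      using critical_cubic_strict_antimono_on[OF S_pos] by (rule monotone_on_subset) auto
  qed (use S_pos k_pos critical_cubic_third in
        \<open>auto intro!: continuous_intros critical_cubic_continuous_on simp: critical_cubic_def\<close>)
  then show ?thesis by simp
qed

lemma critical_points:
  shows "0 < critical_point_lo S k" "critical_point_lo S k < S/3"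
      "critical_cubic S (critical_point_lo S k) = k"
    and "S/3 < critical_point_hi S k" "critical_point_hi S k < S/2"
      "critical_cubic S (critical_point_hi S k) = k"
  using theI'[OF ex1_critical_point_lo] theI'[OF ex1_critical_point_hi]
  unfolding critical_point_lo_def critical_point_hi_def by auto

lemma critical_cubic_below_critical_point_lo:
  "0 < x \<Longrightarrow> x < critical_point_lo S k \<Longrightarrow> critical_cubic S x < k"
  using strict_mono_onD[OF critical_cubic_strict_mono_on[OF S_pos], of x "critical_point_lo S k"]
    critical_points
  by auto

lemma critical_cubic_between_critical_points:
  assumes "critical_point_lo S k < x" "x < critical_point_hi S k"
  shows "k < critical_cubic S x"
proof (cases "x \<le> S/3")
  case True
  then show ?thesis
    using strict_mono_onD[OF critical_cubic_strict_mono_on[OF S_pos], of "critical_point_lo S k" x]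
      critical_points assms
    by auto
next
  case False
  then show ?thesis
    using strict_mono_onD[OF critical_cubic_strict_antimono_on[OF S_pos],
        of x "critical_point_hi S k"] critical_points assms
    by auto
qed

lemma reduced_potential_strict_mono_between_critical_points:
  "strict_mono_on {critical_point_lo S k..critical_point_hi S k} (reduced_potential S k)"
  using critical_points(1) critical_cubic_between_critical_points
    by (intro reduced_potential_strict_mono_on)

lemma ex1_turning_point_lo:
  assumes "reduced_potential S k (critical_point_lo S k) < \<beta>"
  shows "\<exists>!x. 0 < x \<and> x < critical_point_lo S k \<and> reduced_potential S k x = \<beta>"
proof -
  note root = critical_points(1,2)
  have decreasing: "reduced_potential S k y < reduced_potential S k x"
    if "0 < x" "x < y" "y \<le> critical_point_lo S k" for x y
  proof -
    have "strict_mono_on {x..critical_point_lo S k} (\<lambda>z. - reduced_potential S k z)"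
      using that critical_cubic_below_critical_point_lo
        by (intro reduced_potential_strict_antimono_on) auto
    then show ?thesis using that strict_mono_onD by fastforce
  qed
  \<comment> \<open>near \<open>0\<close> the term \<open>k/x\<close> pushes the potential above any level\<close>
  define x0 where "x0 = min (critical_point_lo S k/2) (k/(2*(\<bar>\<beta>\<bar> + 1)))"
  have x0: "0 < x0" "x0 < critical_point_lo S k" using root k_pos unfolding x0_def by auto
  have "x0 \<le> k/(2*(\<bar>\<beta>\<bar> + 1))" unfolding x0_def by simp
  then have "x0*(2*(\<bar>\<beta>\<bar> + 1)) \<le> k" by (simp add: field_simps)
  then have "2*(\<bar>\<beta>\<bar> + 1) \<le> k/x0" using x0 by (simp add: field_simps)
  moreover have "0 < S*x0 - x0^2" using x0 root S_pos by (simp add: power2_eq_square)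
  ultimately have "2*(\<bar>\<beta>\<bar> + 1) < S*x0 - x0^2 + k/x0" by linarith
  then have "\<bar>\<beta>\<bar> + 1 < reduced_potential S k x0" unfolding reduced_potential_def by simp
  then have "\<beta> < reduced_potential S k x0" using abs_ge_self[of \<beta>] by linarith
  then obtain x where x: "x0 \<le> x" "x \<le> critical_point_lo S k" "reduced_potential S k x = \<beta>"
    using IVT2'[of "reduced_potential S k" "critical_point_lo S k" \<beta> x0] x0 assms
      reduced_potential_continuous_on by auto
  then have "0 < x \<and> x < critical_point_lo S k \<and> reduced_potential S k x = \<beta>"
    using x0 assms by (auto simp: le_less)
  moreover have "z = x" if "0 < z \<and> z < critical_point_lo S k \<and> reduced_potential S k z = \<beta>" for z
    using decreasing[of z x] decreasing[of x z] that x x0 by (cases z x rule: linorder_cases) auto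
  ultimately show ?thesis by blast
qed

lemma ex1_turning_point_hi:
  assumes "reduced_potential S k (critical_point_lo S k) < \<beta>"
      "\<beta> < reduced_potential S k (critical_point_hi S k)"
  shows "\<exists>!x. critical_point_lo S k < x \<and> x < critical_point_hi S k \<and> reduced_potential S k x = \<beta>"
  using critical_points assms reduced_potential_strict_mono_between_critical_points
  by (intro strict_mono_on_ex1_level reduced_potential_continuous_on) auto

lemma turning_point_lo:
  assumes "reduced_potential S k (critical_point_lo S k) < \<beta>"
  shows "0 < turning_point_lo S k \<beta>" "turning_point_lo S k \<beta> < critical_point_lo S k"
      "reduced_potential S k (turning_point_lo S k \<beta>) = \<beta>"
  using theI'[OF ex1_turning_point_lo[OF assms]] unfolding turning_point_lo_def by auto

lemma turning_point_hi:
  assumes "reduced_potential S k (critical_point_lo S k) < \<beta>"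
      "\<beta> < reduced_potential S k (critical_point_hi S k)"
  shows "critical_point_lo S k < turning_point_hi S k \<beta>"
      "turning_point_hi S k \<beta> < critical_point_hi S k"
    "reduced_potential S k (turning_point_hi S k \<beta>) = \<beta>"
  using theI'[OF ex1_turning_point_hi[OF assms]] unfolding turning_point_hi_def by auto

lemma turning_point_hi_strict_mono:
  assumes "reduced_potential S k (critical_point_lo S k) < \<beta>1" "\<beta>1 < \<beta>2"
    "\<beta>2 < reduced_potential S k (critical_point_hi S k)"
  shows "turning_point_hi S k \<beta>1 < turning_point_hi S k \<beta>2"
  using strict_mono_on_less[OF reduced_potential_strict_mono_between_critical_points,
      of "turning_point_hi S k \<beta>1" "turning_point_hi S k \<beta>2"]
    turning_point_hi[of \<beta>1] turning_point_hi[of \<beta>2] assms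
  by auto

lemma critical_cubic_between_turning_points:
  assumes "reduced_potential S k (critical_point_lo S k) < \<beta>1" "\<beta>1 < \<beta>2"
    "\<beta>2 < reduced_potential S k (critical_point_hi S k)"
    and "turning_point_hi S k \<beta>1 \<le> x" "x \<le> turning_point_hi S k \<beta>2"
  shows "0 < x" "k < critical_cubic S x"
  using turning_point_hi[of \<beta>1] turning_point_hi[of \<beta>2] critical_points(1)
    critical_cubic_between_critical_points[of x] assms
  by auto

end

section \<open>The period as an integral over a quarter circle\<close>

lemma nonneg_has_integral_substitution:
  fixes F g g' k :: "real \<Rightarrow> real"
  assumes F: "F \<in> borel_measurable borel" "\<And>p. p \<in> {g \<alpha>..g \<beta>} \<Longrightarrow> 0 \<le> F p"
    and g: "\<And>t. t \<in> {\<alpha>..\<beta>} \<Longrightarrow> (g has_real_derivative g' t) (at t)"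
      "continuous_on {\<alpha>..\<beta>} g'" "\<And>t. t \<in> {\<alpha>..\<beta>} \<Longrightarrow> 0 \<le> g' t" "\<alpha> \<le> \<beta>" "g \<alpha> \<le> g \<beta>"
    and k: "continuous_on {\<alpha>..\<beta>} k" "\<And>t. t \<in> {\<alpha>..\<beta>} \<Longrightarrow> 0 \<le> k t"
    and Fk: "\<And>t. \<alpha> < t \<Longrightarrow> t < \<beta> \<Longrightarrow> F (g t) * g' t = k t"
  shows "(F has_integral integral {\<alpha>..\<beta>} k) {g \<alpha>..g \<beta>}"
proof -
  define I where "I = integral {\<alpha>..\<beta>} k"
  have kI: "(k has_integral I) {\<alpha>..\<beta>}"
    unfolding I_def using integrable_continuous_interval[OF k(1)] by (rule integrable_integral)
  have "0 \<le> I" unfolding I_def using k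
    by (intro integral_nonneg integrable_continuous_interval) auto
  have FgI: "((\<lambda>t. F (g t) * g' t) has_integral I) {\<alpha>..\<beta>}"
    by (rule has_integral_spike_finite[OF _ _ kI, of "{\<alpha>, \<beta>}"]) (auto simp: Fk)
  have Fg_nonneg: "0 \<le> F (g t) * g' t" if "t \<in> {\<alpha>..\<beta>}" for t
  proof (cases "t = \<alpha> \<or> t = \<beta>")
    case True
    then have "g t \<in> {g \<alpha>..g \<beta>}" using g(5) by auto
    then show ?thesis using F(2) g(3) that by simp
  next
    case False
    then show ?thesis using Fk[of t] k(2)[OF that] that by auto
  qed
  have "(\<integral>\<^sup>+ p. ennreal (F p * indicator {g \<alpha>..g \<beta>} p) \<partial>lborel)
      = (\<integral>\<^sup>+ t. ennreal (F (g t) * g' t * indicator {\<alpha>..\<beta>} t) \<partial>lborel)"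
    using F(1) by (intro nn_integral_substitution g) (auto simp: set_borel_measurable_def)
  also have "\<dots> = ennreal I"
    using nn_integral_has_integral_lebesgue[OF Fg_nonneg FgI] by (simp add: mult.commute)
  finally have "((\<lambda>p. F p * indicator {g \<alpha>..g \<beta>} p) has_integral I) UNIV"
    using F \<open>0 \<le> I\<close> by (intro nn_integral_has_integral) (auto simp: indicator_def)
  moreover have "(\<lambda>p. F p * indicator {g \<alpha>..g \<beta>} p) = (\<lambda>p. if p \<in> {g \<alpha>..g \<beta>} then F p else 0)"
    by (auto simp: indicator_def)
  ultimately show ?thesis unfolding I_def using has_integral_restrict_UNIV by metis
qed

lemma cos_sin_interpolation:
  fixes a c t :: real
  shows "c*(cos t)^2 + a*(sin t)^2 - a = (c - a)*(cos t)^2"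
    and "c - (c*(cos t)^2 + a*(sin t)^2) = (c - a)*(sin t)^2"
proof -
  show "c*(cos t)^2 + a*(sin t)^2 - a = (c - a)*(cos t)^2"
    by (simp add: sin_squared_eq algebra_simps)
  show "c - (c*(cos t)^2 + a*(sin t)^2) = (c - a)*(sin t)^2"
    by (simp add: cos_squared_eq algebra_simps)
qed

lemma cos_sin_interpolation_bounds:
  fixes a c t :: real
  assumes "a \<le> c"
  shows "a \<le> c*(cos t)^2 + a*(sin t)^2" "c*(cos t)^2 + a*(sin t)^2 \<le> c"
proof -
  have "0 \<le> (c - a)*(cos t)^2" "0 \<le> (c - a)*(sin t)^2" using assms by simp_all
  then show "a \<le> c*(cos t)^2 + a*(sin t)^2" "c*(cos t)^2 + a*(sin t)^2 \<le> c"
    using cos_sin_interpolation[of c t a] by linarith+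
qed

definition sqrt_ratio :: "real \<Rightarrow> real \<Rightarrow> real" where
  "sqrt_ratio d x = sqrt (x / (d - x))"

lemma substitution_integrand_eq:
  fixes a c d w x :: real
  assumes "0 < w" "0 < x" "x < d" "(x - a)*(c - x) = w^2"
  shows "1 / sqrt ((x - a)*(c - x)*(d - x) / x) * (2*w) = 2 * sqrt_ratio d x"
proof -
  have "(x - a)*(c - x)*(d - x) / x = w^2 * ((d - x) / x)"
    using assms(4) by (simp only: times_divide_eq_right)
  then have "sqrt ((x - a)*(c - x)*(d - x) / x) = sqrt (w^2) * sqrt ((d - x) / x)"
    by (simp only: real_sqrt_mult)
  also have "sqrt (w^2) = w" using assms(1) by simp
  finally have "sqrt ((x - a)*(c - x)*(d - x) / x) = w * sqrt ((d - x) / x)" .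
  then show ?thesis unfolding sqrt_ratio_def using assms(1-3) by (simp add: real_sqrt_divide)
qed

lemma period_integral_substitution:
  fixes a c d e :: real and F :: "real \<Rightarrow> real"
  assumes acd: "0 < a" "a < c" "c < d" and F_meas: "F \<in> borel_measurable borel"
    and F: "\<And>p. e - c \<le> p \<Longrightarrow> p \<le> e - a \<Longrightarrow>
      F p = 1 / sqrt ((e - p - a)*(c - (e - p))*(d - (e - p)) / (e - p))"
  shows "(F has_integral integral {0..pi/2} (\<lambda>t. 2 * sqrt_ratio d (c*(cos t)^2 + a*(sin t)^2)))
    {e - c..e - a}"
proof -
  define X where "X t = c*(cos t)^2 + a*(sin t)^2" for t
  define g where "g t = e - X t" for t
  define dg where "dg = (\<lambda>t::real. 2*(c - a) * sin t * cos t)"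
  have X: "a \<le> X t" "X t \<le> c" for t
    unfolding X_def using cos_sin_interpolation_bounds acd by auto
  have g_ends: "g 0 = e - c" "g (pi/2) = e - a" unfolding g_def X_def by simp_all
  have "(F has_integral integral {0..pi/2} (\<lambda>t. 2 * sqrt_ratio d (X t))) {g 0..g (pi/2)}"
  proof (rule nonneg_has_integral_substitution[where g' = dg])
    show "0 \<le> F p" if "p \<in> {g 0..g (pi/2)}" for p
    proof -
      have p: "e - c \<le> p" "p \<le> e - a" using that g_ends by auto
      have "0 \<le> (e - p - a)*(c - (e - p))*(d - (e - p)) / (e - p)"
        using p acd by (intro divide_nonneg_pos mult_nonneg_nonneg) auto
      then show ?thesis using F[OF p] by simp
    qed
    show "(g has_real_derivative dg t) (at t)" for t
      unfolding g_def X_def dg_def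
      by (auto intro!: derivative_eq_intros simp: power2_eq_square algebra_simps)
    show "0 \<le> dg t" if "t \<in> {0..pi/2}" for t
      unfolding dg_def using that acd by (auto intro!: mult_nonneg_nonneg sin_ge_zero cos_ge_zero)
    have "d - X t \<noteq> 0" for t using X[of t] acd by auto
    then show "continuous_on {0..pi/2} (\<lambda>t. 2 * sqrt_ratio d (X t))"
      unfolding sqrt_ratio_def X_def by (intro continuous_intros) auto
    show "0 \<le> 2 * sqrt_ratio d (X t)" for t
      unfolding sqrt_ratio_def using X[of t] acd by simp
    show "F (g t) * dg t = 2 * sqrt_ratio d (X t)" if t: "0 < t" "t < pi/2" for t
    proof -
      define w where "w = (c - a) * sin t * cos t"
      have "0 < sin t" "0 < cos t" using t by (auto intro!: sin_gt_zero cos_gt_zero_pi)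
      then have "0 < w" unfolding w_def using acd by simp
      moreover have "0 < X t" "X t < d" using X[of t] acd by auto
      moreover have "(X t - a)*(c - X t) = w^2"
        unfolding X_def w_def cos_sin_interpolation
          by (simp add: power_mult_distrib power2_eq_square)
      moreover have "e - c \<le> g t" "g t \<le> e - a" "e - g t = X t" unfolding g_def using X[of t]
        by auto
      moreover have "dg t = 2*w" unfolding dg_def w_def by simp
      ultimately show ?thesis using F substitution_integrand_eq[of w "X t" d a c] by simp
    qed
    show "continuous_on {0..pi/2} dg" unfolding dg_def by (intro continuous_intros)
    show "g 0 \<le> g (pi/2)" using g_ends acd by simp
  qed (use F_meas in simp_all)
  then show ?thesis unfolding g_ends X_def .
qed

lemma integral_quarter_symmetrize:
  fixes f :: "real \<Rightarrow> real"
  assumes "continuous_on {0..pi/2} f"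
  shows "2 * integral {0..pi/2} f = integral {0..pi/2} (\<lambda>t. f t + f (pi/2 - t))"
proof -
  have f: "(f has_integral integral {0..pi/2} f) {0..pi/2}"
    using integrable_continuous_interval[OF assms] by (rule integrable_integral)
  then have "((\<lambda>x. f (-x)) has_integral integral {0..pi/2} f) {-(pi/2)..-0}"
    by (subst has_integral_reflect_real)
  then have "(((\<lambda>x. f (-x)) \<circ> (+) (-(pi/2))) has_integral integral {0..pi/2} f) {0..pi/2}"
    by (subst has_integral_shift_Icc_real) simp
  then have "((\<lambda>t. f (pi/2 - t)) has_integral integral {0..pi/2} f) {0..pi/2}"
    by (simp add: o_def)
  from has_integral_add[OF f this]
  have "integral {0..pi/2} (\<lambda>t. f t + f (pi/2 - t)) = integral {0..pi/2} f + integral {0..pi/2} f"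
    by (rule integral_unique)
  then show ?thesis by simp
qed

section \<open>The kernel as a function of the middle turning point\<close>

definition companion_lo :: "real \<Rightarrow> real \<Rightarrow> real \<Rightarrow> real" where
  "companion_lo S k c = ((S - c) - sqrt ((S - c)^2 - 4*k/c)) / 2"

definition companion_hi :: "real \<Rightarrow> real \<Rightarrow> real \<Rightarrow> real" where
  "companion_hi S k c = ((S - c) + sqrt ((S - c)^2 - 4*k/c)) / 2"

lemma companion_discriminant_pos:
  fixes S k c :: real
  assumes "0 < c" "k < critical_cubic S c"
  shows "(S - 3*c)^2 < (S - c)^2 - 4*k/c"
proof -
  have "(S - c)^2 - 4*k/c - (S - 3*c)^2 = 4*(critical_cubic S c - k)/c"
    using assms by (simp add: critical_cubic_def field_simps power2_eq_square)
  moreover have "0 < 4*(critical_cubic S c - k)/c" using assms by simp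
  ultimately show ?thesis by linarith
qed

lemma companion_roots:
  fixes S k c :: real
  assumes "0 < k" "0 < c" "k < critical_cubic S c"
  shows "0 < companion_lo S k c" "companion_lo S k c < c" "c < companion_hi S k c"
    and "companion_lo S k c + companion_hi S k c = S - c"
    and "companion_lo S k c * companion_hi S k c = k/c"
proof -
  define \<Delta> where "\<Delta> = (S - c)^2 - 4*k/c"
  define r where "r = sqrt \<Delta>"
  have lo: "companion_lo S k c = (S - c - r)/2" and hi: "companion_hi S k c = (S - c + r)/2"
    unfolding companion_lo_def companion_hi_def r_def \<Delta>_def by simp_all
  have D: "(S - 3*c)^2 < \<Delta>" unfolding \<Delta>_def using companion_discriminant_pos assms(2,3) .
  then have "\<bar>S - 3*c\<bar> < r" unfolding r_def using real_sqrt_less_mono by fastforce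
  moreover have "r < S - c"
  proof -
    have "S - 2*c > 0"
      using assms mult_nonneg_nonpos[of "c^2" "S - 2*c"] unfolding critical_cubic_def by fastforce
    moreover have "\<Delta> < (S - c)^2" unfolding \<Delta>_def using assms by simp
    ultimately show ?thesis unfolding r_def using real_sqrt_less_mono assms by fastforce
  qed
  moreover have rsq: "r^2 = \<Delta>"
    unfolding r_def using D zero_le_power2[of "S - 3*c"] by (intro real_sqrt_pow2) linarith
  ultimately show "0 < companion_lo S k c" "companion_lo S k c < c" "c < companion_hi S k c"
    unfolding lo hi by (auto simp: abs_less_iff)
  show "companion_lo S k c + companion_hi S k c = S - c" unfolding lo hi by (simp add: field_simps)
  have "companion_lo S k c * companion_hi S k c = ((S - c)^2 - r^2)/4"
    unfolding lo hi by (simp add: field_simps power2_eq_square)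
  then show "companion_lo S k c * companion_hi S k c = k/c"
    unfolding rsq \<Delta>_def by simp
qed

lemma companion_roots_eq:
  fixes a c d k :: real
  assumes "0 < a" "a < c" "c < d" "a*c*d = k"
  shows "companion_lo (a + c + d) k c = a" "companion_hi (a + c + d) k c = d"
proof -
  have "((a + c + d) - c)^2 - 4*k/c = (d - a)^2"
    using assms by (simp add: field_simps power2_eq_square)
  then have "sqrt (((a + c + d) - c)^2 - 4*k/c) = d - a" using assms by simp
  then show "companion_lo (a + c + d) k c = a" "companion_hi (a + c + d) k c = d"
    unfolding companion_lo_def companion_hi_def by simp_all
qed

lemma has_real_derivative_companion_lo:
  fixes S k c :: real
  assumes "0 < k" "0 < c" "k < critical_cubic S c"
  defines "a \<equiv> companion_lo S k c" and "d \<equiv> companion_hi S k c"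
  shows "(companion_lo S k has_real_derivative a*(c - d) / (c*(d - a))) (at c)"
proof -
  note roots = companion_roots[OF assms(1-3), folded a_def d_def]
  have r: "sqrt ((S - c)^2 - 4*k/c) = d - a"
    unfolding a_def d_def companion_lo_def companion_hi_def by (simp add: field_simps)
  have ad: "a < d" using roots by linarith
  have "(companion_lo S k has_real_derivative (-1 - (-2*(S - c) + 4*k/c^2) / (2*(d - a)))/2) (at c)"
    unfolding companion_lo_def[abs_def] using assms(2) r ad
    by (auto intro!: derivative_eq_intros simp: power2_eq_square field_simps)
  moreover have "(-1 - (-2*(S - c) + 4*k/c^2) / (2*(d - a)))/2 = a*(c - d) / (c*(d - a))"
  proof -
    have "S - c = a + d" "4*k/c^2 = 4*a*d/c" using roots assms(2)
      by (simp_all add: field_simps power2_eq_square)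
    then have "(-1 - (-2*(S - c) + 4*k/c^2) / (2*(d - a)))/2
        = (-1 - (-2*(a + d) + 4*a*d/c) / (2*(d - a)))/2"
      by simp
    also have "\<dots> = a*(c - d) / (c*(d - a))" using ad assms(2) by (simp add: field_simps)
    finally show ?thesis .
  qed
  ultimately show ?thesis by simp
qed

lemma has_real_derivative_companion_hi:
  fixes S k c :: real
  assumes "0 < k" "0 < c" "k < critical_cubic S c"
  defines "a \<equiv> companion_lo S k c" and "d \<equiv> companion_hi S k c"
  shows "(companion_hi S k has_real_derivative d*(a - c) / (c*(d - a))) (at c)"
proof -
  note roots = companion_roots[OF assms(1-3), folded a_def d_def]
  have "companion_hi S k = (\<lambda>c. (S - c) - companion_lo S k c)"
    unfolding companion_lo_def companion_hi_def by (auto simp: field_simps)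
  moreover have "((\<lambda>c. (S - c) - companion_lo S k c) has_real_derivative
      -1 - a*(c - d) / (c*(d - a))) (at c)"
    using has_real_derivative_companion_lo[OF assms(1-3), folded a_def d_def]
    by (auto intro!: derivative_eq_intros)
  moreover have "-1 - a*(c - d) / (c*(d - a)) = d*(a - c) / (c*(d - a))"
    using roots by (simp add: field_simps)
  ultimately show ?thesis by simp
qed

lemma sqrt_cube_factor:
  fixes a d :: real
  assumes "a < d"
  shows "sqrt (a*(d-a)^3) = sqrt (a/(d-a)) * (d-a)^2"
proof -
  have "a*(d-a)^3 = a/(d-a) * ((d-a)^2)^2" using assms by (simp add: field_simps power_eq_if)
  then have "sqrt (a*(d-a)^3) = sqrt (a/(d-a)) * sqrt (((d-a)^2)^2)" by (simp only: real_sqrt_mult)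
  also have "sqrt (((d-a)^2)^2) = (d-a)^2" by (simp only: real_sqrt_abs abs_power2)
  finally show ?thesis .
qed

lemma has_real_derivative_sqrt_ratio:
  fixes A D :: "real \<Rightarrow> real"
  assumes "(A has_real_derivative A') (at x)" "(D has_real_derivative D') (at x)"
    and "0 < A x" "A x < D x"
  shows "((\<lambda>x. sqrt_ratio (D x) (A x)) has_real_derivative
           (A' * D x - A x * D') / (2 * sqrt (A x * (D x - A x)^3))) (at x)"
proof -
  have "((\<lambda>x. sqrt (A x / (D x - A x))) has_real_derivative
      inverse (sqrt (A x / (D x - A x))) / 2
      * ((A' * (D x - A x) - A x * (D' - A')) / ((D x - A x) * (D x - A x)))) (at x)"
    using assms by (intro DERIV_chain2[OF DERIV_real_sqrt] derivative_intros) auto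
  moreover have "inverse (sqrt (A x / (D x - A x))) / 2
      * ((A' * (D x - A x) - A x * (D' - A')) / ((D x - A x) * (D x - A x)))
      = (A' * D x - A x * D') / (2 * (sqrt (A x / (D x - A x)) * (D x - A x)^2))"
    using assms by (simp add: field_simps power2_eq_square)
  ultimately show ?thesis
    unfolding sqrt_ratio_def using assms by (simp add: sqrt_cube_factor)
qed

lemma has_real_derivative_kernel_term:
  fixes S k c u :: real
  assumes "0 < k" "0 < c" "k < critical_cubic S c" and u: "0 \<le> u" "u \<le> 1"
  defines "a \<equiv> companion_lo S k c" and "d \<equiv> companion_hi S k c"
  defines "x \<equiv> a*(1-u) + c*u"
  shows "((\<lambda>c. sqrt_ratio (companion_hi S k c) (companion_lo S k c*(1-u) + c*u)) has_real_derivative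
      d / (2*c*(d - a)) * (((1-u)*(a*(2*c-a-d)) + u*(c*(d+c-2*a))) / sqrt (x*(d-x)^3))) (at c)"
proof -
  note roots = companion_roots[OF assms(1-3), folded a_def d_def]
  define m where "m = c*(d - a)"
  define A' where "A' = a*(c - d) / m*(1-u) + u"
  define D' where "D' = d*(a - c) / m"
  have "((\<lambda>c. companion_lo S k c*(1-u) + c*u) has_real_derivative A') (at c)"
    unfolding A'_def m_def using has_real_derivative_companion_lo[OF assms(1-3), folded a_def d_def]
    by (auto intro!: derivative_eq_intros)
  moreover have "(companion_hi S k has_real_derivative D') (at c)"
    unfolding D'_def m_def
    using has_real_derivative_companion_hi[OF assms(1-3), folded a_def d_def] .
  moreover have "0 < x" "x < d"
    using interpolation_bounds[of a c u] roots(1-3) u unfolding x_def by linarith+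
  ultimately have deriv: "((\<lambda>c. sqrt_ratio (companion_hi S k c) (companion_lo S k c*(1-u) + c*u))
      has_real_derivative (A' * d - x * D') / (2 * sqrt (x*(d-x)^3))) (at c)"
    using has_real_derivative_sqrt_ratio[of "\<lambda>c. companion_lo S k c*(1-u) + c*u" A' c
        "companion_hi S k" D']
    unfolding a_def d_def x_def by simp
  have "A' * d - x * D' = d*((1-u)*(a*(2*c-a-d)) + u*(c*(d+c-2*a))) / m"
  proof -
    have "m \<noteq> 0" unfolding m_def using roots by simp
    then have "A' * d - x * D' = (a*(c-d)*(1-u)*d + u*d*m - x*(d*(a-c))) / m"
      unfolding A'_def D'_def by (simp add: field_simps)
    also have "a*(c-d)*(1-u)*d + u*d*m - x*(d*(a-c)) = d*((1-u)*(a*(2*c-a-d)) + u*(c*(d+c-2*a)))"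
      unfolding x_def m_def by (simp add: algebra_simps)
    finally show ?thesis .
  qed
  moreover have "d*N / m / (2*W) = d / (2*m) * (N / W)" for N W :: real
    by (simp only: divide_divide_eq_left times_divide_times_eq mult.left_commute[of m 2])
  ultimately have "(A' * d - x * D') / (2 * sqrt (x*(d-x)^3))
      = d / (2*m) * (((1-u)*(a*(2*c-a-d)) + u*(c*(d+c-2*a))) / sqrt (x*(d-x)^3))"
    by (simp only:)
  with deriv show ?thesis unfolding m_def by (simp only: mult.assoc)
qed

lemma quotient_sum_pos:
  fixes x y d \<alpha> \<beta> :: real
  assumes "0 < x" "x \<le> y" "y < d" "\<alpha> \<le> \<beta>" "0 < \<alpha> + \<beta>" "0 \<le> \<beta>*x + \<alpha>*y"
  shows "0 < \<alpha> / sqrt (x*(d-x)^3) + \<beta> / sqrt (y*(d-y)^3)"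
proof -
  define Wx where "Wx = sqrt (x*(d-x)^3)"
  define Wy where "Wy = sqrt (y*(d-y)^3)"
  have Wx: "0 < Wx" "Wx^2 = x*(d-x)^3" and Wy: "0 < Wy" "Wy^2 = y*(d-y)^3"
    using assms unfolding Wx_def Wy_def by auto
  have \<beta>: "0 < \<beta>" using assms by linarith
  have "0 < \<alpha>/Wx + \<beta>/Wy"
  proof (cases "0 \<le> \<alpha>")
    case True
    then show ?thesis using \<beta> Wx Wy by (intro add_nonneg_pos) simp_all
  next
    case False
    have "\<beta> * (-\<alpha>*y) \<le> \<beta> * (\<beta>*x)"
      using assms \<beta> by (intro mult_left_mono) auto
    moreover have "(-\<alpha>) * (-\<alpha>*y) < \<beta> * (-\<alpha>*y)"
      using assms False \<beta> by (intro mult_strict_right_mono) (auto simp: mult_neg_pos)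
    ultimately have "\<alpha>^2 * y < \<beta>^2 * x" by (simp add: power2_eq_square algebra_simps)
    then have "\<alpha>^2 * y * (d-y)^3 < \<beta>^2 * x * (d-y)^3" using assms by simp
    also have "\<dots> \<le> \<beta>^2 * x * (d-x)^3"
      using assms by (intro mult_left_mono power_mono) auto
    also have "\<dots> = (\<beta>*Wx)^2" by (simp add: power_mult_distrib Wx(2))
    finally have "(-\<alpha>*Wy)^2 < (\<beta>*Wx)^2" by (simp add: power_mult_distrib Wy(2))
    then have "-\<alpha>*Wy < \<beta>*Wx"
      by (rule power_less_imp_less_base) (use \<beta> Wx in simp)
    then have "-\<alpha>/Wx < \<beta>/Wy" using Wx Wy by (simp add: field_simps)
    then show ?thesis using minus_divide_left[of \<alpha> Wx] by linarith
  qed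
  then show ?thesis unfolding Wx_def Wy_def .
qed

lemma kernel_derivative_numerators_pos:
  fixes a c d u :: real
  defines "P \<equiv> a*(2*c-a-d)" and "Q \<equiv> c*(d+c-2*a)"
    and "x \<equiv> a*(1-u) + c*u" and "y \<equiv> a*u + c*(1-u)"
  assumes acd: "0 < a" "a < c" "c < d" and u: "0 \<le> u" "u \<le> 1"
  shows "0 < ((1-u)*P + u*Q) / sqrt (x*(d-x)^3) + (u*P + (1-u)*Q) / sqrt (y*(d-y)^3)"
proof -
  have "P + Q = (c-a)*(c+a+d)" "Q - P = (2*c-a)*(c-a) + (d-c)*(c+a)"
    unfolding P_def Q_def by (simp_all add: algebra_simps)
  moreover have "0 < (c-a)*(c+a+d)" "0 \<le> (2*c-a)*(c-a)" "0 \<le> (d-c)*(c+a)"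
    using acd by simp_all
  ultimately have PQ: "0 < P + Q" "P \<le> Q" by linarith+
  have cross: "0 \<le> (u*P + (1-u)*Q) * x + ((1-u)*P + u*Q) * y"
  proof -
    have "(u*P + (1-u)*Q) * x + ((1-u)*P + u*Q) * y
       = (u^2 + (1-u)^2) * (3*a*c*(c-a)) + (2*u*(1-u)) * ((c-a)*((c-a)^2 + a*c + d*(c+a)))"
      unfolding P_def Q_def x_def y_def by (simp add: algebra_simps power2_eq_square)
    also have "\<dots> \<ge> 0" using acd u by (intro add_nonneg_nonneg mult_nonneg_nonneg) auto
    finally show ?thesis .
  qed
  have xy: "0 < x" "x < d" "0 < y" "y < d"
    using interpolation_bounds[of a c u] acd u unfolding x_def y_def by linarith+
  have sum: "((1-u)*P + u*Q) + (u*P + (1-u)*Q) = P + Q" by (simp add: algebra_simps)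
  have swap: "y - x = (1-2*u)*(c-a)" "(u*P + (1-u)*Q) - ((1-u)*P + u*Q) = (1-2*u)*(Q-P)"
    unfolding x_def y_def by (simp_all add: algebra_simps)
  show ?thesis
  proof (cases "u \<le> 1/2")
    case True
    then have "0 \<le> (1-2*u)*(c-a)" "0 \<le> (1-2*u)*(Q-P)" using acd PQ by simp_all
    then have "x \<le> y" "(1-u)*P + u*Q \<le> u*P + (1-u)*Q" using swap by linarith+
    then show ?thesis using xy PQ cross sum by (intro quotient_sum_pos) simp_all
  next
    case False
    then have "(1-2*u)*(c-a) \<le> 0" "(1-2*u)*(Q-P) \<le> 0"
      using acd PQ by (simp_all add: mult_nonpos_nonneg)
    then have "y \<le> x" "u*P + (1-u)*Q \<le> (1-u)*P + u*Q" using swap by linarith+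
    then have "0 < (u*P + (1-u)*Q) / sqrt (y*(d-y)^3) + ((1-u)*P + u*Q) / sqrt (x*(d-x)^3)"
      using xy PQ cross sum by (intro quotient_sum_pos) (simp_all add: ac_simps)
    then show ?thesis by (simp only: ac_simps)
  qed
qed

text \<open>With \<open>u = sin\<^sup>2 t\<close>, the two summands are the substituted integrand at \<open>t\<close> and at \<open>\<pi>/2 - t\<close>.\<close>

definition period_kernel :: "real \<Rightarrow> real \<Rightarrow> real \<Rightarrow> real \<Rightarrow> real" where
  "period_kernel S k u c =
     sqrt_ratio (companion_hi S k c) (companion_lo S k c*(1-u) + c*u)
   + sqrt_ratio (companion_hi S k c) (companion_lo S k c*u + c*(1-u))"

lemma period_kernel_has_positive_derivative:
  fixes S k c u :: real
  assumes "0 < k" "0 < c" "k < critical_cubic S c" and u: "0 \<le> u" "u \<le> 1"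
  shows "\<exists>D. (period_kernel S k u has_real_derivative D) (at c) \<and> 0 < D"
proof -
  define a where "a = companion_lo S k c"
  define d where "d = companion_hi S k c"
  define x where "x = a*(1-u) + c*u"
  define y where "y = a*u + c*(1-u)"
  define P where "P = a*(2*c-a-d)"
  define Q where "Q = c*(d+c-2*a)"
  have uu: "1 - (1 - u) = u" by simp
  have t2: "((\<lambda>c. sqrt_ratio (companion_hi S k c) (companion_lo S k c*u + c*(1-u)))
      has_real_derivative d / (2*c*(d - a)) * ((u*P + (1-u)*Q) / sqrt (y*(d-y)^3))) (at c)"
    using has_real_derivative_kernel_term[OF assms(1-3), of "1-u"] u
    unfolding uu a_def[symmetric] d_def[symmetric] y_def[symmetric]
      P_def[symmetric] Q_def[symmetric]
    by simp
  have t1: "((\<lambda>c. sqrt_ratio (companion_hi S k c) (companion_lo S k c*(1-u) + c*u))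
      has_real_derivative d / (2*c*(d - a)) * (((1-u)*P + u*Q) / sqrt (x*(d-x)^3))) (at c)"
    using has_real_derivative_kernel_term[OF assms(1-3) u]
    unfolding a_def[symmetric] d_def[symmetric] x_def[symmetric] P_def[symmetric] Q_def[symmetric] .
  have deriv: "(period_kernel S k u has_real_derivative
      d / (2*c*(d - a)) * (((1-u)*P + u*Q) / sqrt (x*(d-x)^3))
      + d / (2*c*(d - a)) * ((u*P + (1-u)*Q) / sqrt (y*(d-y)^3))) (at c)"
    unfolding period_kernel_def[abs_def] by (rule DERIV_add[OF t1 t2])
  note roots = companion_roots[OF assms(1-3), folded a_def d_def]
  have "0 < d / (2*c*(d - a))" using roots(1-3) by simp
  moreover have "0 < ((1-u)*P + u*Q) / sqrt (x*(d-x)^3) + (u*P + (1-u)*Q) / sqrt (y*(d-y)^3)"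
    unfolding P_def Q_def x_def y_def using roots(1-3) u by (rule kernel_derivative_numerators_pos)
  ultimately have "0 < d / (2*c*(d - a)) * (((1-u)*P + u*Q) / sqrt (x*(d-x)^3))
      + d / (2*c*(d - a)) * ((u*P + (1-u)*Q) / sqrt (y*(d-y)^3))"
    by (simp only: distrib_left[symmetric]) (rule mult_pos_pos)
  with deriv show ?thesis by blast
qed

lemma period_kernel_strict_mono:
  fixes S k u :: real
  assumes "0 < k" "0 < c1" "c1 < c2" "\<And>c. c1 \<le> c \<Longrightarrow> c \<le> c2 \<Longrightarrow> k < critical_cubic S c"
    and "0 \<le> u" "u \<le> 1"
  shows "period_kernel S k u c1 < period_kernel S k u c2"
proof (rule DERIV_pos_imp_increasing[OF assms(3)])
  fix c assume c: "c1 \<le> c" "c \<le> c2"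
  have "0 < c" using c assms(2) by linarith
  with assms(1,5,6) assms(4)[OF c]
  show "\<exists>D. (period_kernel S k u has_real_derivative D) (at c) \<and> 0 < D"
    by (intro period_kernel_has_positive_derivative)
qed

lemma period_kernel_integral:
  fixes a c d :: real
  assumes "0 < a" "a < c" "c < d"
  shows "2 * integral {0..pi/2} (\<lambda>t. 2 * sqrt_ratio d (c*(cos t)^2 + a*(sin t)^2))
       = integral {0..pi/2} (\<lambda>t. 2 * period_kernel (a + c + d) (a*c*d) ((sin t)^2) c)"
proof -
  define f where "f t = 2 * sqrt_ratio d (c*(cos t)^2 + a*(sin t)^2)" for t
  have "d - (c*(cos t)^2 + a*(sin t)^2) \<noteq> 0" for t
    using cos_sin_interpolation_bounds[of a c t] assms by auto
  then have "continuous_on {0..pi/2} f"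
    unfolding f_def sqrt_ratio_def by (intro continuous_intros) auto
  then have "2 * integral {0..pi/2} f = integral {0..pi/2} (\<lambda>t. f t + f (pi/2 - t))"
    by (rule integral_quarter_symmetrize)
  also have "\<dots> = integral {0..pi/2} (\<lambda>t. 2 * period_kernel (a + c + d) (a*c*d) ((sin t)^2) c)"
  proof (rule integral_cong)
    fix t :: real
    have "sin (pi/2 - t) = cos t" "cos (pi/2 - t) = sin t" by (simp_all add: sin_diff cos_diff)
    then show "f t + f (pi/2 - t) = 2 * period_kernel (a + c + d) (a*c*d) ((sin t)^2) c"
      unfolding f_def period_kernel_def companion_roots_eq[OF assms refl]
      by (simp add: cos_squared_eq algebra_simps)
  qed
  finally show ?thesis unfolding f_def .
qed

lemma period_kernel_continuous_on:
  assumes "0 < k" "0 < c" "k < critical_cubic S c"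
  shows "continuous_on A (\<lambda>t. 2 * period_kernel S k ((sin t)^2) c)"
proof -
  define a where "a = companion_lo S k c"
  define d where "d = companion_hi S k c"
  note roots = companion_roots[OF assms, folded a_def d_def]
  have "a*(1 - (sin t)^2) + c*(sin t)^2 < d" "a*(sin t)^2 + c*(1 - (sin t)^2) < d" for t
    using interpolation_bounds[of a c "(sin t)^2"] roots(2,3) by (simp_all add: abs_square_le_1)
  then show ?thesis
    unfolding period_kernel_def sqrt_ratio_def a_def[symmetric] d_def[symmetric]
    by (intro continuous_intros) force+
qed

lemma period_kernel_integral_strict_mono:
  fixes S k :: real
  assumes "0 < k" "0 < c1" "c1 < c2" "\<And>c. c1 \<le> c \<Longrightarrow> c \<le> c2 \<Longrightarrow> k < critical_cubic S c"
  shows "integral {0..pi/2} (\<lambda>t. 2 * period_kernel S k ((sin t)^2) c1)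
       < integral {0..pi/2} (\<lambda>t. 2 * period_kernel S k ((sin t)^2) c2)"
proof (rule integral_less_real)
  show "continuous_on {0..pi/2} (\<lambda>t. 2 * period_kernel S k ((sin t)^2) c1)"
    "continuous_on {0..pi/2} (\<lambda>t. 2 * period_kernel S k ((sin t)^2) c2)"
    using assms by (intro period_kernel_continuous_on; auto)+
  show "{0<..<pi/2} \<noteq> {}" using pi_gt_zero by (simp add: not_le)
  show "2 * period_kernel S k ((sin t)^2) c1 < 2 * period_kernel S k ((sin t)^2) c2" for t
    using period_kernel_strict_mono[OF assms] by (simp add: abs_square_le_1)
qed

section \<open>Monotonicity of the period\<close>

context
  fixes C1 C2 C3 :: real
  assumes S_pos: "0 < 2*C1 + C2" and C3_pos: "0 < C3" and C3_less: "C3 < C3crit C1 C2"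
begin

lemma C3_less_cube: "27*C3 < (2*C1 + C2)^3"
  using C3_less unfolding C3crit_def by simp

lemma phi2_eq: "phi2 C1 C2 C3 = C1 - critical_point_lo (2*C1 + C2) C3"
  unfolding phi2_def critical_point_lo_def
  using S_pos C3_pos C3_less_cube
  by (intro the_reflect_eq ex1_critical_point_lo) (auto simp: cubic_eq_critical_cubic field_simps)

lemma phi1_eq: "phi1 C1 C2 C3 = C1 - critical_point_hi (2*C1 + C2) C3"
  unfolding phi1_def critical_point_hi_def
  using S_pos C3_pos C3_less_cube
  by (intro the_reflect_eq ex1_critical_point_hi) (auto simp: cubic_eq_critical_cubic field_simps)

lemma bminus_eq:
  "bminus C1 C2 C3 = -(C1*(C1 + 2*C2))/2
    + reduced_potential (2*C1 + C2) C3 (critical_point_lo (2*C1 + C2) C3)"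
  unfolding bminus_def Upot_eq_reduced_potential phi2_eq by simp

lemma bplus_eq:
  "bplus C1 C2 C3 = -(C1*(C1 + 2*C2))/2
    + reduced_potential (2*C1 + C2) C3 (critical_point_hi (2*C1 + C2) C3)"
  unfolding bplus_def Upot_eq_reduced_potential phi1_eq by simp

lemma phiplus_eq:
  assumes "bminus C1 C2 C3 < b"
  shows "phiplus C1 C2 C3 b = C1 - turning_point_lo (2*C1 + C2) C3 (b + C1*(C1 + 2*C2)/2)"
  unfolding phiplus_def turning_point_lo_def phi2_eq
  using S_pos C3_pos C3_less_cube assms
  by (intro the_reflect_eq ex1_turning_point_lo) (auto simp: bminus_eq Upot_eq_reduced_potential)

lemma phiminus_eq:
  assumes "bminus C1 C2 C3 < b" "b < bplus C1 C2 C3"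
  shows "phiminus C1 C2 C3 b = C1 - turning_point_hi (2*C1 + C2) C3 (b + C1*(C1 + 2*C2)/2)"
  unfolding phiminus_def turning_point_hi_def phi1_eq phi2_eq
  using S_pos C3_pos C3_less_cube assms
  by (intro the_reflect_eq ex1_turning_point_hi)
    (auto simp: bminus_eq bplus_eq Upot_eq_reduced_potential)

lemma energy_gap_factor:
  assumes "bminus C1 C2 C3 < b" "b < bplus C1 C2 C3"
  defines "\<beta> \<equiv> b + C1*(C1 + 2*C2)/2"
  defines "a \<equiv> turning_point_lo (2*C1 + C2) C3 \<beta>" and "c \<equiv> turning_point_hi (2*C1 + C2) C3 \<beta>"
  defines "d \<equiv> 2*C1 + C2 - a - c"
  shows "0 < a" "a < c" "c < d" "a*c*d = C3"
    and "\<And>p. p < C1 \<Longrightarrow>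
      2 * (b - Upot C1 C2 C3 p) = (C1 - p - a)*(c - (C1 - p))*(d - (C1 - p)) / (C1 - p)"
proof -
  note SC3 = S_pos C3_pos C3_less_cube
  have \<beta>: "reduced_potential (2*C1 + C2) C3 (critical_point_lo (2*C1 + C2) C3) < \<beta>"
    "\<beta> < reduced_potential (2*C1 + C2) C3 (critical_point_hi (2*C1 + C2) C3)"
    using assms unfolding bminus_eq bplus_eq \<beta>_def by simp_all
  note a = turning_point_lo[OF SC3 \<beta>(1), folded a_def]
  note c = turning_point_hi[OF SC3 \<beta>, folded c_def]
  show "0 < a" "a < c" using a c by linarith+
  note level = reduced_potential_level_factor[OF a(1) \<open>a < c\<close> a(3) c(3), folded d_def]
  show "a*c*d = C3" by (rule level(1))
  show "c < d" unfolding d_def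
    using third_root_gt[OF a(1) \<open>a < c\<close> level(1)[unfolded d_def]]
      critical_cubic_between_critical_points[OF SC3 c(1,2)] .
  fix p :: real assume "p < C1"
  have "2 * (b - Upot C1 C2 C3 p) = 2 * (\<beta> - reduced_potential (2*C1 + C2) C3 (C1 - p))"
    unfolding Upot_eq_reduced_potential \<beta>_def by simp
  also have "\<dots> = (C1 - p - a)*(c - (C1 - p))*(d - (C1 - p)) / (C1 - p)"
    using level(2)[of "C1 - p"] \<open>p < C1\<close> by simp
  finally show "2 * (b - Upot C1 C2 C3 p) = (C1 - p - a)*(c - (C1 - p))*(d - (C1 - p)) / (C1 - p)" .
qed

lemma period_eq_kernel_integral:
  assumes "bminus C1 C2 C3 < b" "b < bplus C1 C2 C3"
  shows "period C1 C2 C3 b = integral {0..pi/2}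
    (\<lambda>t. 2 * period_kernel (2*C1 + C2) C3 ((sin t)^2)
      (turning_point_hi (2*C1 + C2) C3 (b + C1*(C1 + 2*C2)/2)))"
proof -
  define a where "a = turning_point_lo (2*C1 + C2) C3 (b + C1*(C1 + 2*C2)/2)"
  define c where "c = turning_point_hi (2*C1 + C2) C3 (b + C1*(C1 + 2*C2)/2)"
  define d where "d = 2*C1 + C2 - a - c"
  note factor = energy_gap_factor[OF assms, folded a_def c_def, folded d_def]
  have "period C1 C2 C3 b
      = 2 * integral {C1 - c..C1 - a} (\<lambda>p. 1 / sqrt (2 * (b - Upot C1 C2 C3 p)))"
    unfolding period_def phiminus_eq[OF assms] phiplus_eq[OF assms(1)] a_def c_def ..
  also have "\<dots> = 2 * integral {0..pi/2} (\<lambda>t. 2 * sqrt_ratio d (c*(cos t)^2 + a*(sin t)^2))"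
  proof -
    have "1 / sqrt (2 * (b - Upot C1 C2 C3 p))
        = 1 / sqrt ((C1 - p - a)*(c - (C1 - p))*(d - (C1 - p)) / (C1 - p))"
      if "C1 - c \<le> p" "p \<le> C1 - a" for p
      using factor(1,5) that by simp
    from period_integral_substitution[OF factor(1-3) _ this] show ?thesis
      unfolding Upot_def by (simp add: integral_unique measurable)
  qed
  also have "\<dots> = integral {0..pi/2} (\<lambda>t. 2 * period_kernel (a + c + d) (a*c*d) ((sin t)^2) c)"
    by (rule period_kernel_integral[OF factor(1-3)])
  also have "a + c + d = 2*C1 + C2" unfolding d_def by simp
  also note factor(4)
  finally show ?thesis unfolding c_def .
qed

end

theorem theorem2:
  fixes C1 C2 C3 :: real
  assumes "2*C1 + C2 > 0"
    and "0 < C3" and "C3 < C3crit C1 C2"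
  shows "strict_mono_on {bminus C1 C2 C3 <..< bplus C1 C2 C3} (period C1 C2 C3)"
proof (rule strict_mono_onI)
  define S where "S = 2*C1 + C2"
  define \<beta> where "\<beta> b = b + C1*(C1 + 2*C2)/2" for b
  fix b1 b2 assume b: "b1 \<in> {bminus C1 C2 C3 <..< bplus C1 C2 C3}"
    "b2 \<in> {bminus C1 C2 C3 <..< bplus C1 C2 C3}" "b1 < b2"
  note SC3 = assms(1)[folded S_def] assms(2) C3_less_cube[OF assms, folded S_def]
  have \<beta>: "reduced_potential S C3 (critical_point_lo S C3) < \<beta> b1" "\<beta> b1 < \<beta> b2"
    "\<beta> b2 < reduced_potential S C3 (critical_point_hi S C3)"
    using b unfolding bminus_eq[OF assms] bplus_eq[OF assms] \<beta>_def S_def by auto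
  have "turning_point_hi S C3 (\<beta> b1) < turning_point_hi S C3 (\<beta> b2)"
    by (rule turning_point_hi_strict_mono[OF SC3 \<beta>])
  then have "integral {0..pi/2}
      (\<lambda>t. 2 * period_kernel S C3 ((sin t)^2) (turning_point_hi S C3 (\<beta> b1)))
      < integral {0..pi/2} (\<lambda>t. 2 * period_kernel S C3 ((sin t)^2) (turning_point_hi S C3 (\<beta> b2)))"
    using critical_cubic_between_turning_points[OF SC3 \<beta>] assms(2)
    by (intro period_kernel_integral_strict_mono) auto
  then show "period C1 C2 C3 b1 < period C1 C2 C3 b2"
    using period_eq_kernel_integral[OF assms] b unfolding \<beta>_def S_def by simp
qed

end
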